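(* Let $\overline{\delta}>\underline{\delta}>0$, $\alpha\in(0,1)$, and let $C:[0,1]\to\mathbb{R}^{D\times D}$ be $\alpha$-H\"older continuous with $\overline{\delta}|y|^2\ge y^TC(t)C(t)^Ty\ge\underline{\delta}|y|^2$ for all $y\in\mathbb{R}^D$, $t\in[0,1]$. Define $\Sigma(t,s):=\int_t^sC(u)C(u)^Tdu$ for $0\le t<s\le1$. Then: (1) $\Sigma(t,s)$ is symmetric positive definite and $|\Sigma(t,s)_{ij}|\le\overline{\delta}(s-t)$, $\underline{\delta}(s-t)\le\Sigma(t,s)_{ii}$ for $i,j=1,\dots,D$. (2) $\Sigma(t,s)^{-1}$ exists, is symmetric positive definite, and $\frac1{\overline{\delta}(s-t)}\le\Sigma(t,s)^{-1}_{ii}\le\frac1{\underline{\delta}(s-t)}$; consequently $|\Sigma(t,s)^{-1}_{ij}|\le\frac1{\underline{\delta}(s-t)}$ for $i,j=1,\dots,D$. (3) The lower triangular Cholesky factor $L(t,s)$ in $\Sigma(t,s)=L(t,s)L(t,s)^T$ satisfies $|L(t,s)_{ij}|\le\sqrt{\overline{\delta}(s-t)}$ and $L(t,s)_{ii}\ge\sqrt{\underline{\delta}(s-t)}$ for $i,j=1,\dots,D$. (4) There is a constant $c$ depending only on $\underline{\delta},\overline{\delta},D$ such that $\|L(t_1,s)-L(t_2,s)\|_F\le c\sqrt{t_2-t_1}$ for $0\le t_1<t_2<s\le1$. (5) There is a constant $c$ depending only on $\underline{\delta},\overline{\delta},D$ such that for $i=1,\dots,D$ and $0\le t_1<t_2<s\le1$,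 $$\Big|\sqrt{\Sigma(t_1,s)^{-1}_{ii}}-\sqrt{\Sigma(t_2,s)^{-1}_{ii}}\Big|\le c\min\Big\{\frac1{\sqrt{s-t_2}},\frac{t_2-t_1}{(s-t_2)^{3/2}}\Big\}.$$
   Context: $\|X\|_F$ denotes the Frobenius norm $\big(\sum_{i,j}X_{ij}^2\big)^{1/2}$ of a matrix $X$. *)

theory Defs
  imports "HOL-Analysis.Analysis"
begin

text \<open>Matrices in R^{D x D} are rendered as real^'n^'n with D = CARD('n);
  the index type is well-ordered so that "lower triangular" makes sense.\<close>

definition frob_norm :: "real^'n^'m \<Rightarrow> real" where
  "frob_norm X = sqrt (\<Sum>i\<in>UNIV. \<Sum>j\<in>UNIV. (X $ i $ j)^2)"

definition holder_on01 :: "real \<Rightarrow> (real \<Rightarrow> real^'n^'n) \<Rightarrow> bool" where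
  "holder_on01 \<alpha> C \<longleftrightarrow> (\<exists>K. \<forall>t\<in>{0..1}. \<forall>u\<in>{0..1}.
      frob_norm (C t - C u) \<le> K * \<bar>t - u\<bar> powr \<alpha>)"

definition cov_bounds :: "real \<Rightarrow> real \<Rightarrow> (real \<Rightarrow> real^'n^'n) \<Rightarrow> bool" where
  "cov_bounds dl du C \<longleftrightarrow> (\<forall>t\<in>{0..1}. \<forall>y::real^'n.
      du * (norm y)^2 \<ge> y \<bullet> ((C t ** transpose (C t)) *v y) \<and>
      y \<bullet> ((C t ** transpose (C t)) *v y) \<ge> dl * (norm y)^2)"

definition Sigma_mat :: "(real \<Rightarrow> real^'n^'n) \<Rightarrow> real \<Rightarrow> real \<Rightarrow> real^'n^'n" where
  "Sigma_mat C t s = integral {t..s} (\<lambda>u. C u ** transpose (C u))"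

definition symmetric_mat :: "real^'n^'n \<Rightarrow> bool" where
  "symmetric_mat A \<longleftrightarrow> transpose A = A"

definition pos_def_mat :: "real^'n^'n \<Rightarrow> bool" where
  "pos_def_mat A \<longleftrightarrow> symmetric_mat A \<and> (\<forall>x. x \<noteq> 0 \<longrightarrow> x \<bullet> (A *v x) > 0)"

definition lower_triangular :: "(real^('n::{finite,wellorder})^('n::{finite,wellorder})) \<Rightarrow> bool" where
  "lower_triangular L \<longleftrightarrow> (\<forall>i j. i < j \<longrightarrow> L $ i $ j = 0)"

definition is_cholesky :: "(real^('n::{finite,wellorder})^('n::{finite,wellorder})) \<Rightarrow> real^('n::{finite,wellorder})^('n::{finite,wellorder}) \<Rightarrow> bool" where
  "is_cholesky A L \<longleftrightarrow> lower_triangular L \<and> (\<forall>i. L $ i $ i > 0) \<and> A = L ** transpose L"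

end

theory Submission
  imports Defs
begin

text \<open>
  Integrating the pointwise bounds on $C C^T$ shows that the quadratic form of $\Sigma(t,s)$ lies
  between $\underline{\delta}(s-t)|y|^2$ and $\overline{\delta}(s-t)|y|^2$; the rest is linear
  algebra for a symmetric matrix $A$ with form bounds $a \le b$.  Such a matrix has entries bounded
  by $b$ and diagonal at least $a$, and its inverse has form bounds $1/b$ and $1/a$.  The Cholesky
  factor is built row by row (the Schur complements stay positive), and
  $L_{ii}^2 = \min \{y^T A y : y_i = 1,\ y_k = 0 \text{ for } k > i\}$, which gives
  $L_{ii} \ge \sqrt a$ and monotonicity of $L_{ii}$ in $A$.

  For the regularity in $t$ write $\Sigma(t_1,s) = \Sigma(t_2,s) + E$, where $E = \Sigma(t_1,t_2)$
  is positive semidefinite with form bound $\overline{\delta}(t_2-t_1)$.  Then $L_1 = L_2 M$, and each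
  row of $M - I$ has squared length at most $r^T E r$ for a row $r$ of $L_2^{-1}$; the diagonals of
  the two inverses differ by $q^T E p$ for columns $p$, $q$ of the inverses.  All these vectors are
  controlled by $1/(\underline{\delta}(s-t_2))$.
\<close>

lemma matrix_vector_mult_component: "(A *v x) $ i = (\<Sum>j\<in>UNIV. A $ i $ j * x $ j)"
  by (simp add: matrix_vector_mult_def)

lemma matrix_vector_mult_axis: "((A::real^'n^'m) *v axis j 1) $ i = A $ i $ j"
  by (simp add: matrix_vector_mult_component axis_def if_distrib cong: if_cong)

lemma matrix_entry_eq_inner_axis: "(A::real^'n^'m) $ i $ j = axis i 1 \<bullet> (A *v axis j 1)"
  by (simp add: inner_axis' matrix_vector_mult_axis)

lemma mat_1_row: "(mat 1 :: real^'n^'n) $ i = axis i 1"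
  by (simp add: mat_def axis_def vec_eq_iff)

lemma matrix_mult_row: "((R::real^'n^'m) ** L) $ i = transpose L *v R $ i"
  by (simp add: vec_eq_iff matrix_vector_mult_component transpose_def matrix_matrix_mult_def mult.commute)

lemma inner_matrix_vector_mult_transpose: "x \<bullet> ((A::real^'n^'m) *v y) = (transpose A *v x) \<bullet> y"
  by (simp add: dot_lmul_matrix)

lemma component_sq_le_norm_sq: "(x $ i)^2 \<le> (norm (x::real^'n))^2"
  by (metis component_le_norm_cart norm_ge_zero power2_abs power_mono real_norm_def)

lemma norm_sq_vec_eq_sum: "(norm (x::real^'n))^2 = (\<Sum>i\<in>UNIV. (x $ i)^2)"
  unfolding power2_norm_eq_inner inner_vec_def by (simp add: power2_eq_square)

lemma norm_sq_matrix_eq_sum_rows: "(norm (X::real^'n^'m))^2 = (\<Sum>i\<in>UNIV. (norm (X $ i))^2)"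
  by (simp add: power2_norm_eq_inner inner_vec_def)

lemma frob_norm_eq_norm: "frob_norm (X::real^'n^'m) = norm X"
proof -
  have "(norm X)^2 = (\<Sum>i\<in>UNIV. \<Sum>j\<in>UNIV. (X $ i $ j)^2)"
    unfolding norm_sq_matrix_eq_sum_rows norm_sq_vec_eq_sum ..
  then show ?thesis unfolding frob_norm_def by (metis norm_ge_zero real_sqrt_unique)
qed

lemma norm_sq_matrix_mult_le:
  fixes A :: "real^'n^'m" and N :: "real^'k^'n"
  assumes A: "\<And>w. (norm (A *v w))^2 \<le> K * (norm w)^2"
  shows "(norm (A ** N))^2 \<le> K * (norm N)^2"
proof -
  have entry: "(A ** N) $ i $ j = (A *v column j N) $ i" for i j
    by (simp add: matrix_matrix_mult_def matrix_vector_mult_component column_def)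
  have "(norm (A ** N))^2 = (\<Sum>j\<in>UNIV. \<Sum>i\<in>UNIV. ((A *v column j N) $ i)^2)"
    unfolding norm_sq_matrix_eq_sum_rows norm_sq_vec_eq_sum entry by (rule sum.swap)
  also have "\<dots> \<le> (\<Sum>j\<in>UNIV. K * (norm (column j N))^2)"
    unfolding norm_sq_vec_eq_sum[symmetric] by (rule sum_mono) (rule A)
  also have "\<dots> = K * (\<Sum>j\<in>UNIV. \<Sum>i\<in>UNIV. (N $ i $ j)^2)"
    by (simp add: sum_distrib_left norm_sq_vec_eq_sum column_def)
  also have "\<dots> = K * (norm N)^2"
    unfolding norm_sq_matrix_eq_sum_rows norm_sq_vec_eq_sum by (subst sum.swap) (rule refl)
  finally show ?thesis .
qed

lemma norm_sq_mult_vec_le_if_transpose: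
  fixes L :: "real^'n^'n"
  assumes LT: "\<And>p. (norm (transpose L *v p))^2 \<le> b * (norm p)^2"
  shows "(norm (L *v w))^2 \<le> b * (norm w)^2"
proof -
  have "0 \<le> (norm (transpose L *v axis undefined 1))^2" by simp
  also have "\<dots> \<le> b" using LT[of "axis undefined 1"] by simp
  finally have b: "0 \<le> b" .
  define p where "p = L *v w"
  have "norm (transpose L *v p) \<le> sqrt (b * (norm p)^2)" using LT[of p] by (rule real_le_rsqrt)
  then have LTp: "norm (transpose L *v p) \<le> sqrt b * norm p" by (simp add: real_sqrt_mult)
  have "(norm p)^2 = (transpose L *v p) \<bullet> w"
    unfolding p_def by (simp add: power2_norm_eq_inner inner_matrix_vector_mult_transpose)
  also have "\<dots> \<le> sqrt b * norm p * norm w"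
    using order_trans[OF norm_cauchy_schwarz mult_right_mono[OF LTp norm_ge_zero]] .
  finally have "norm p \<le> sqrt b * norm w"
    using b by (cases "p = 0") (auto simp: power2_eq_square)
  then have "(norm p)^2 \<le> (sqrt b * norm w)^2" by (rule power_mono) simp
  then show ?thesis using b by (simp add: p_def power_mult_distrib)
qed

lemma inner_gram_mult: "x \<bullet> (((L::real^'n^'m) ** transpose L) *v x) = (norm (transpose L *v x))^2"
  by (simp add: matrix_vector_mul_assoc[symmetric] inner_matrix_vector_mult_transpose power2_norm_eq_inner)

lemma gram_entry: "((L::real^'n^'m) ** transpose L) $ i $ j = L $ i \<bullet> L $ j"
  by (simp add: matrix_matrix_mult_def transpose_def inner_vec_def)

lemma sq_entry_le_gram_diag: "((L::real^'n^'m) $ i $ j)^2 \<le> (L ** transpose L) $ i $ i"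
  unfolding gram_entry power2_norm_eq_inner[symmetric] by (rule component_sq_le_norm_sq)

lemma symmetric_mat_entry: "symmetric_mat A \<Longrightarrow> A $ i $ j = A $ j $ i"
  unfolding symmetric_mat_def by (metis transpose_def vec_lambda_beta)

lemma symmetric_mat_inner_commute:
  "symmetric_mat (A::real^'n^'n) \<Longrightarrow> x \<bullet> (A *v y) = y \<bullet> (A *v x)"
  unfolding symmetric_mat_def by (metis inner_matrix_vector_mult_transpose inner_commute)

lemma symmetric_mat_quadratic_form_add:
  assumes "symmetric_mat (A::real^'n^'n)"
  shows "(u + v) \<bullet> (A *v (u + v)) = u \<bullet> (A *v u) + v \<bullet> (A *v v) + 2 * (u \<bullet> (A *v v))"
  using symmetric_mat_inner_commute[OF assms, of v u]
  by (simp add: matrix_vector_right_distrib inner_add_left inner_add_right)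

lemma symmetric_mat_quadratic_form_diff:
  assumes "symmetric_mat (A::real^'n^'n)"
  shows "(u - v) \<bullet> (A *v (u - v)) = u \<bullet> (A *v u) + v \<bullet> (A *v v) - 2 * (u \<bullet> (A *v v))"
  using symmetric_mat_inner_commute[OF assms, of v u]
  by (simp add: matrix_vector_mult_diff_distrib inner_diff_left inner_diff_right)

lemma matrix_inv_mult:
  fixes A :: "real^'n^'n"
  assumes "invertible A"
  shows "A ** matrix_inv A = mat 1" and "matrix_inv A ** A = mat 1"
proof -
  have "\<exists>A'. A ** A' = mat 1 \<and> A' ** A = mat 1"
    using assms unfolding invertible_def by blast
  then have "A ** matrix_inv A = mat 1 \<and> matrix_inv A ** A = mat 1"
    unfolding matrix_inv_def by (rule someI_ex)
  then show "A ** matrix_inv A = mat 1" "matrix_inv A ** A = mat 1" by auto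
qed

lemma matrix_inv_vector_mult:
  fixes A :: "real^'n^'n"
  assumes "invertible A"
  shows "A *v (matrix_inv A *v x) = x"
  using matrix_inv_mult(1)[OF assms] by (simp add: matrix_vector_mul_assoc)

lemma invertible_if_ker_trivial:
  fixes A :: "real^'n^'n"
  assumes "\<And>x. A *v x = 0 \<Longrightarrow> x = 0"
  shows "invertible A"
  using assms matrix_left_invertible_ker invertible_left_inverse by blast

lemma transpose_matrix_inv_mult:
  fixes A :: "real^'n^'n"
  assumes "invertible A"
  shows "transpose (matrix_inv A) ** transpose A = mat 1"
    and "transpose A ** transpose (matrix_inv A) = mat 1"
  using matrix_inv_mult[OF assms] by (metis matrix_transpose_mul transpose_mat)+

lemma symmetric_mat_matrix_inv:
  fixes A :: "real^'n^'n"
  assumes "invertible A" and "symmetric_mat A"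
  shows "symmetric_mat (matrix_inv A)"
proof -
  let ?B = "matrix_inv A"
  have "transpose ?B = transpose ?B ** (A ** ?B)" by (simp add: matrix_inv_mult(1)[OF assms(1)])
  also have "\<dots> = ?B"
    using transpose_matrix_inv_mult(1)[OF assms(1)] assms(2) unfolding symmetric_mat_def
    by (simp add: matrix_mul_assoc)
  finally show ?thesis unfolding symmetric_mat_def .
qed

section \<open>Symmetric matrices with bounded quadratic form\<close>

definition form_bounded :: "real \<Rightarrow> real \<Rightarrow> real^'n^'n \<Rightarrow> bool" where
  "form_bounded a b A \<longleftrightarrow> symmetric_mat A \<and>
     (\<forall>x. a * (norm x)^2 \<le> x \<bullet> (A *v x) \<and> x \<bullet> (A *v x) \<le> b * (norm x)^2)"

lemma form_boundedD:
  assumes "form_bounded a b A"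
  shows "symmetric_mat A" "a * (norm x)^2 \<le> x \<bullet> (A *v x)" "x \<bullet> (A *v x) \<le> b * (norm x)^2"
  using assms unfolding form_bounded_def by auto

lemma form_bounded_mono:
  fixes A :: "real^'n^'n"
  assumes A: "form_bounded a b A" and "a' \<le> a" and "b \<le> b'"
  shows "form_bounded a' b' A"
  unfolding form_bounded_def
proof (intro conjI allI)
  fix x :: "real^'n"
  have "a' * (norm x)^2 \<le> a * (norm x)^2" "b * (norm x)^2 \<le> b' * (norm x)^2"
    using assms(2,3) by (auto intro: mult_right_mono)
  then show "a' * (norm x)^2 \<le> x \<bullet> (A *v x)" "x \<bullet> (A *v x) \<le> b' * (norm x)^2"
    using form_boundedD(2,3)[OF A, of x] by linarith+
qed (rule form_boundedD(1)[OF A])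

lemma form_bounded_nonneg:
  assumes "form_bounded a b A" and "0 \<le> a"
  shows "0 \<le> x \<bullet> (A *v x)"
  using form_boundedD(2)[OF assms(1), of x] assms(2) by (meson order_trans zero_le_mult_iff zero_le_power2)

lemma form_bounded_add:
  assumes "form_bounded a b A" and "form_bounded c d E"
  shows "form_bounded (a + c) (b + d) (A + E)"
  using assms unfolding form_bounded_def symmetric_mat_def
  by (simp add: matrix_vector_mult_add_rdistrib inner_add_right distrib_right add_mono transpose_def vec_eq_iff)

lemma form_bounded_diag:
  assumes "form_bounded a b A"
  shows "a \<le> A $ i $ i" "A $ i $ i \<le> b"
  using form_boundedD(2,3)[OF assms, of "axis i 1"] by (simp_all add: matrix_entry_eq_inner_axis[symmetric])

lemma form_bounded_pos_def:
  fixes A :: "real^'n^'n"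
  assumes "form_bounded a b A" and "0 < a"
  shows "pos_def_mat A"
  unfolding pos_def_mat_def
proof (intro conjI allI impI)
  show "symmetric_mat A" using form_boundedD(1)[OF assms(1)] .
  fix x :: "real^'n" assume "x \<noteq> 0"
  then have "0 < a * (norm x)^2" using assms(2) by simp
  then show "0 < x \<bullet> (A *v x)" using form_boundedD(2)[OF assms(1), of x] by linarith
qed

text \<open>Positivity of the form at $e_i \pm e_j$.\<close>
lemma abs_entry_le_diag_mean:
  assumes "symmetric_mat (A::real^'n^'n)" and "\<And>x. 0 \<le> x \<bullet> (A *v x)"
  shows "\<bar>A $ i $ j\<bar> \<le> (A $ i $ i + A $ j $ j) / 2"
proof -
  let ?u = "axis i (1::real)" and ?v = "axis j (1::real)"
  have "0 \<le> (?u + ?v) \<bullet> (A *v (?u + ?v))" "0 \<le> (?u - ?v) \<bullet> (A *v (?u - ?v))"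
    using assms(2) by auto
  then show ?thesis
    unfolding symmetric_mat_quadratic_form_add[OF assms(1)] symmetric_mat_quadratic_form_diff[OF assms(1)]
      matrix_entry_eq_inner_axis[symmetric] by auto
qed

lemma form_bounded_abs_entry:
  fixes A :: "real^'n^'n"
  assumes "form_bounded a b A" and "0 \<le> a"
  shows "\<bar>A $ i $ j\<bar> \<le> b"
proof -
  have "(A $ i $ i + A $ j $ j) / 2 \<le> (b + b) / 2"
    using form_bounded_diag(2)[OF assms(1)] by (intro divide_right_mono add_mono) auto
  then show ?thesis
    using abs_entry_le_diag_mean[OF form_boundedD(1)[OF assms(1)] form_bounded_nonneg[OF assms], of i j]
    by simp
qed

lemma form_bounded_spd_entries:
  fixes A :: "real^'n^'n"
  assumes "form_bounded a b A" and "0 < a"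
  shows "symmetric_mat A \<and> pos_def_mat A \<and> (\<forall>i j. \<bar>A $ i $ j\<bar> \<le> b) \<and> (\<forall>i. a \<le> A $ i $ i \<and> A $ i $ i \<le> b)"
  using form_boundedD(1)[OF assms(1)] form_bounded_pos_def[OF assms]
    form_bounded_abs_entry[OF assms(1) less_imp_le[OF assms(2)]] form_bounded_diag[OF assms(1)]
  by blast

lemma psd_form_cauchy_schwarz:
  assumes "symmetric_mat (A::real^'n^'n)" and "\<And>x. 0 \<le> x \<bullet> (A *v x)" and "0 < v \<bullet> (A *v v)"
  shows "(u \<bullet> (A *v v))^2 \<le> (u \<bullet> (A *v u)) * (v \<bullet> (A *v v))"
proof -
  define l where "l = (u \<bullet> (A *v v)) / (v \<bullet> (A *v v))"
  have "0 \<le> (u - l *\<^sub>R v) \<bullet> (A *v (u - l *\<^sub>R v))" using assms(2) .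
  also have "\<dots> = u \<bullet> (A *v u) + l^2 * (v \<bullet> (A *v v)) - 2 * l * (u \<bullet> (A *v v))"
    unfolding symmetric_mat_quadratic_form_diff[OF assms(1)]
    by (simp add: matrix_vector_mult_scaleR power2_eq_square)
  also have "\<dots> = u \<bullet> (A *v u) - (u \<bullet> (A *v v))^2 / (v \<bullet> (A *v v))"
    unfolding l_def using assms(3) by (simp add: field_simps power2_eq_square)
  finally show ?thesis using assms(3) by (simp add: field_simps)
qed

lemma form_bounded_invertible:
  assumes "form_bounded a b A" and "0 < a"
  shows "invertible A"
proof (rule invertible_if_ker_trivial)
  fix x assume "A *v x = 0"
  then have "a * (norm x)^2 \<le> 0" using form_boundedD(2)[OF assms(1), of x] by simp
  then show "x = 0" using assms(2) by (simp add: mult_le_0_iff)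
qed

lemma form_bounded_norm_matrix_inv_vector:
  assumes A: "form_bounded a b A" and a: "0 < a"
  shows "norm (matrix_inv A *v x) \<le> norm x / a"
proof -
  have inv: "invertible A" using form_bounded_invertible[OF A a] .
  define y where "y = matrix_inv A *v x"
  have Ay: "A *v y = x" unfolding y_def using matrix_inv_vector_mult(1)[OF inv] .
  have "a * (norm y)^2 \<le> norm x * norm y"
    using form_boundedD(2)[OF A, of y] unfolding Ay
    by (metis inner_commute norm_cauchy_schwarz order_trans)
  then show ?thesis
    unfolding y_def[symmetric] using a by (cases "y = 0") (auto simp: power2_eq_square field_simps)
qed

text \<open>With $y = A^{-1} x$ the form of $A^{-1}$ at $x$ is the form of $A$ at $y$; the upper bound
  comes from $a|y|^2 \le x \cdot y$, the lower one from Cauchy--Schwarz for the form of $A$.\<close>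
lemma form_bounded_matrix_inv:
  fixes A :: "real^'n^'n"
  assumes A: "form_bounded a b A" and a: "0 < a"
  shows "form_bounded (1 / b) (1 / a) (matrix_inv A)"
  unfolding form_bounded_def
proof (intro conjI allI)
  have inv: "invertible A" using form_bounded_invertible[OF A a] .
  have b: "0 < b" using form_bounded_diag[OF A] a by (meson less_le_trans order_trans)
  have sym: "symmetric_mat A" and psd: "\<And>x. 0 \<le> x \<bullet> (A *v x)"
    using form_boundedD(1)[OF A] form_bounded_nonneg[OF A] a by auto
  show "symmetric_mat (matrix_inv A)" using symmetric_mat_matrix_inv[OF inv sym] .
  fix x :: "real^'n"
  define y where "y = matrix_inv A *v x"
  have Ay: "A *v y = x" unfolding y_def using matrix_inv_vector_mult(1)[OF inv] .
  have form: "x \<bullet> (matrix_inv A *v x) = y \<bullet> (A *v y)"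
    unfolding Ay by (simp add: y_def inner_commute)
  have "y \<bullet> (A *v y) \<le> norm x * norm y" unfolding Ay by (metis inner_commute norm_cauchy_schwarz)
  also have "\<dots> \<le> norm x * (norm x / a)"
    using form_bounded_norm_matrix_inv_vector[OF A a, of x] unfolding y_def by (intro mult_left_mono) auto
  also have "\<dots> = (norm x)^2 / a" by (simp add: power2_eq_square)
  finally show "x \<bullet> (matrix_inv A *v x) \<le> 1 / a * (norm x)^2"
    unfolding form by simp
  show "1 / b * (norm x)^2 \<le> x \<bullet> (matrix_inv A *v x)"
  proof (cases "x = 0")
    case False
    then have "y \<noteq> 0" using Ay by auto
    then have ypos: "0 < y \<bullet> (A *v y)"
      using form_bounded_pos_def[OF A a] unfolding pos_def_mat_def by blast
    have "(norm x ^ 2)^2 = (x \<bullet> (A *v y))^2" unfolding Ay by (simp add: power2_norm_eq_inner)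
    also have "\<dots> \<le> (x \<bullet> (A *v x)) * (y \<bullet> (A *v y))" by (rule psd_form_cauchy_schwarz[OF sym psd ypos])
    also have "\<dots> \<le> (b * (norm x)^2) * (y \<bullet> (A *v y))"
      using form_boundedD(3)[OF A, of x] ypos by (simp add: mult_right_mono)
    finally have "(norm x)^2 \<le> b * (y \<bullet> (A *v y))"
      using False by (simp add: power2_eq_square)
    then show ?thesis unfolding form using b by (simp add: field_simps)
  qed simp
qed

lemma form_bounded_polarization:
  fixes E :: "real^'n^'n"
  assumes E: "form_bounded 0 K E"
  shows "\<bar>q \<bullet> (E *v p)\<bar> \<le> K * (norm p + norm q)^2 / 4"
proof -
  have sym: "symmetric_mat E" by (rule form_boundedD(1)[OF E])
  have "0 \<le> axis undefined 1 \<bullet> (E *v axis undefined 1)" by (rule form_bounded_nonneg[OF E order_refl])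
  also have "\<dots> \<le> K" using form_boundedD(3)[OF E, of "axis undefined 1"] by simp
  finally have K: "0 \<le> K" .
  have "(norm (q + p))^2 \<le> (norm p + norm q)^2"
    using norm_triangle_ineq[of q p] by (intro power_mono) (linarith, simp)
  then have "(q + p) \<bullet> (E *v (q + p)) \<le> K * (norm p + norm q)^2"
    using order_trans[OF form_boundedD(3)[OF E] mult_left_mono[OF _ K]] by blast
  moreover have "(norm (q - p))^2 \<le> (norm p + norm q)^2"
    using norm_triangle_ineq4[of q p] by (intro power_mono) (linarith, simp)
  then have "(q - p) \<bullet> (E *v (q - p)) \<le> K * (norm p + norm q)^2"
    using order_trans[OF form_boundedD(3)[OF E] mult_left_mono[OF _ K]] by blast
  moreover have "0 \<le> (q + p) \<bullet> (E *v (q + p))" "0 \<le> (q - p) \<bullet> (E *v (q - p))"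
    using form_bounded_nonneg[OF E order_refl] by auto
  ultimately have "\<bar>(q + p) \<bullet> (E *v (q + p)) - (q - p) \<bullet> (E *v (q - p))\<bar> \<le> K * (norm p + norm q)^2"
    by linarith
  then show ?thesis
    unfolding symmetric_mat_quadratic_form_add[OF sym] symmetric_mat_quadratic_form_diff[OF sym] by simp
qed

section \<open>Triangular matrices and Cholesky factors\<close>

lemma lower_triangular_mult_vec_diag:
  fixes L :: "real^('n::{finite,wellorder})^('n::{finite,wellorder})"
  assumes "lower_triangular L" and "\<forall>k<j. x $ k = 0"
  shows "(L *v x) $ j = L $ j $ j * x $ j"
proof -
  have "(L *v x) $ j = (\<Sum>k\<in>UNIV. if k = j then L $ j $ j * x $ j else 0)"
    unfolding matrix_vector_mult_component
    by (rule sum.cong[OF refl]) (use assms in \<open>auto simp: lower_triangular_def dest: not_less_iff_gr_or_eq[THEN iffD1]\<close>)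
  then show ?thesis by simp
qed

lemma lower_triangular_mult_vec_eq_0:
  fixes L :: "real^('n::{finite,wellorder})^('n::{finite,wellorder})"
  assumes L: "lower_triangular L" "\<forall>i. L $ i $ i \<noteq> 0"
    and y: "\<forall>i<j. (L *v x) $ i = 0" and "i < j"
  shows "x $ i = 0"
  using \<open>i < j\<close>
proof (induction i rule: less_induct)
  case (less i)
  then have "(L *v x) $ i = L $ i $ i * x $ i"
    using lower_triangular_mult_vec_diag[OF L(1)] by auto
  then show ?case using y L(2) less.prems by auto
qed

lemma lower_triangular_invertible:
  fixes L :: "real^('n::{finite,wellorder})^('n::{finite,wellorder})"
  assumes L: "lower_triangular L" "\<forall>i. L $ i $ i \<noteq> 0"
  shows "invertible L"
proof (rule invertible_if_ker_trivial)
  fix x assume Lx: "L *v x = 0"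
  show "x = 0"
    unfolding vec_eq_iff
  proof
    fix j
    have "\<forall>k<j. x $ k = 0" using lower_triangular_mult_vec_eq_0[OF L] Lx by simp
    then have "(L *v x) $ j = L $ j $ j * x $ j" by (rule lower_triangular_mult_vec_diag[OF L(1)])
    then show "x $ j = 0 $ j" using Lx L(2) by simp
  qed
qed

lemma lower_triangular_matrix_inv:
  fixes L :: "real^('n::{finite,wellorder})^('n::{finite,wellorder})"
  assumes L: "lower_triangular L" "\<forall>i. L $ i $ i \<noteq> 0"
  shows "lower_triangular (matrix_inv L)" and "matrix_inv L $ i $ i = 1 / L $ i $ i"
proof -
  have inv: "invertible L" using lower_triangular_invertible[OF L] .
  have col: "L *v (matrix_inv L *v axis j 1) = axis j 1" for j
    using matrix_inv_vector_mult(1)[OF inv] .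
  have above: "matrix_inv L $ k $ j = 0" if "k < j" for k j
  proof -
    have "\<forall>i<j. (L *v (matrix_inv L *v axis j 1)) $ i = 0" using col[of j] by (simp add: axis_def)
    then have "(matrix_inv L *v axis j 1) $ k = 0" by (rule lower_triangular_mult_vec_eq_0[OF L _ that])
    then show ?thesis by (simp add: matrix_vector_mult_axis)
  qed
  then show "lower_triangular (matrix_inv L)" unfolding lower_triangular_def by blast
  have "(L *v (matrix_inv L *v axis i 1)) $ i = L $ i $ i * matrix_inv L $ i $ i"
    using lower_triangular_mult_vec_diag[OF L(1)] above by (simp add: matrix_vector_mult_axis)
  then show "matrix_inv L $ i $ i = 1 / L $ i $ i"
    using col[of i] L(2) by (simp add: field_simps)
qed

lemma is_choleskyD:
  assumes "is_cholesky A L"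
  shows "lower_triangular L" "\<forall>i. L $ i $ i \<noteq> 0" "0 < L $ i $ i" "A = L ** transpose L"
  using assms unfolding is_cholesky_def by (auto simp: less_imp_neq[symmetric])

lemma cholesky_diag_sq_le_form:
  assumes "is_cholesky A L" and "y $ i = 1" and "\<forall>k>i. y $ k = 0"
  shows "(L $ i $ i)^2 \<le> y \<bullet> (A *v y)"
proof -
  have "(transpose L *v y) $ i = (\<Sum>k\<in>UNIV. if k = i then L $ i $ i else 0)"
    unfolding matrix_vector_mult_component
    by (rule sum.cong[OF refl])
       (use assms is_choleskyD(1)[OF assms(1)] in \<open>auto simp: transpose_def lower_triangular_def dest: not_less_iff_gr_or_eq[THEN iffD1]\<close>)
  then have "(L $ i $ i)^2 = ((transpose L *v y) $ i)^2" by simp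
  also have "\<dots> \<le> (norm (transpose L *v y))^2" by (rule component_sq_le_norm_sq)
  finally show ?thesis unfolding is_choleskyD(4)[OF assms(1)] inner_gram_mult .
qed

text \<open>Equality holds at $y = L_{ii}\,(L^{-1})^T e_i$, where $L^T y = L_{ii}\, e_i$.\<close>
lemma cholesky_diag_sq_eq_form:
  fixes A L :: "real^('n::{finite,wellorder})^('n::{finite,wellorder})"
  assumes "is_cholesky A L"
  obtains y where "y $ i = 1" "\<forall>k>i. y $ k = 0" "y \<bullet> (A *v y) = (L $ i $ i)^2"
proof
  note L = is_choleskyD[OF assms]
  define y where "y = L $ i $ i *\<^sub>R (transpose (matrix_inv L) *v axis i 1)"
  have "transpose L *v y = L $ i $ i *\<^sub>R ((transpose L ** transpose (matrix_inv L)) *v axis i 1)"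
    by (simp only: y_def matrix_vector_mult_scaleR matrix_vector_mul_assoc)
  also have "\<dots> = L $ i $ i *\<^sub>R axis i 1"
    using transpose_matrix_inv_mult(2)[OF lower_triangular_invertible[OF L(1,2)]] by simp
  finally have "transpose L *v y = L $ i $ i *\<^sub>R axis i 1" .
  then show "y \<bullet> (A *v y) = (L $ i $ i)^2"
    unfolding L(4) inner_gram_mult by simp
  show "y $ i = 1" "\<forall>k>i. y $ k = 0"
    using lower_triangular_matrix_inv[OF L(1,2)] L(3)
    by (auto simp: y_def matrix_vector_mult_axis transpose_def lower_triangular_def less_imp_neq[symmetric])
qed

lemma form_bounded_cholesky_entries:
  fixes A L :: "real^('n::{finite,wellorder})^('n::{finite,wellorder})"
  assumes A: "form_bounded a b A" and a: "0 \<le> a" and L: "is_cholesky A L"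
  shows "\<bar>L $ i $ j\<bar> \<le> sqrt b" and "sqrt a \<le> L $ i $ i"
proof -
  have "(L $ i $ j)^2 \<le> b"
    using sq_entry_le_gram_diag[of L i j] form_bounded_diag(2)[OF A, of i] is_choleskyD(4)[OF L]
    by simp
  then show "\<bar>L $ i $ j\<bar> \<le> sqrt b" using real_sqrt_le_mono by fastforce
  obtain y where y: "y $ i = 1" "\<forall>k>i. y $ k = 0" "y \<bullet> (A *v y) = (L $ i $ i)^2"
    by (rule cholesky_diag_sq_eq_form[OF L])
  have "a = a * (y $ i)^2" using y(1) by simp
  also have "\<dots> \<le> a * (norm y)^2" using a component_sq_le_norm_sq by (rule mult_left_mono[rotated])
  also have "\<dots> \<le> (L $ i $ i)^2" using form_boundedD(2)[OF A, of y] y(3) by simp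
  finally show "sqrt a \<le> L $ i $ i"
    using is_choleskyD(3)[OF L] by (metis abs_of_pos real_sqrt_abs real_sqrt_le_mono)
qed

lemma cholesky_diag_mono:
  fixes A1 A2 L1 L2 :: "real^('n::{finite,wellorder})^('n::{finite,wellorder})"
  assumes L1: "is_cholesky A1 L1" and L2: "is_cholesky A2 L2"
    and le: "\<And>x. x \<bullet> (A2 *v x) \<le> x \<bullet> (A1 *v x)"
  shows "L2 $ i $ i \<le> L1 $ i $ i"
proof -
  obtain y where y: "y $ i = 1" "\<forall>k>i. y $ k = 0" "y \<bullet> (A1 *v y) = (L1 $ i $ i)^2"
    by (rule cholesky_diag_sq_eq_form[OF L1])
  have "(L2 $ i $ i)^2 \<le> (L1 $ i $ i)^2"
    using order_trans[OF cholesky_diag_sq_le_form[OF L2 y(1,2)] le[of y]] unfolding y(3) .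
  then show ?thesis by (rule power2_le_imp_le) (rule less_imp_le[OF is_choleskyD(3)[OF L1]])
qed

definition partial_cholesky :: "real^('n::{finite,wellorder})^('n::{finite,wellorder}) \<Rightarrow> ('n::{finite,wellorder}) set \<Rightarrow> real^('n::{finite,wellorder})^('n::{finite,wellorder}) \<Rightarrow> bool" where
  "partial_cholesky A S L \<longleftrightarrow> lower_triangular L \<and> (\<forall>i. 0 < L $ i $ i) \<and>
     (\<forall>i. i \<notin> S \<longrightarrow> L $ i = axis i 1) \<and> (\<forall>i\<in>S. \<forall>j. j \<notin> S \<longrightarrow> L $ i $ j = 0) \<and>
     (\<forall>i\<in>S. \<forall>j\<in>S. (L ** transpose L) $ i $ j = A $ i $ j)"

lemma partial_cholesky_mult_vec_outside:
  assumes "partial_cholesky A S L" and "j \<notin> S"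
  shows "(L *v x) $ j = x $ j" and "(transpose L *v x) $ j = x $ j"
proof -
  have row: "L $ m $ j = (if m = j then 1 else 0)" for m
    using assms unfolding partial_cholesky_def by (cases "m \<in> S") (auto simp: axis_def)
  have "(L *v x) $ j = L $ j \<bullet> x" by (simp add: matrix_vector_mult_component inner_vec_def mult.commute)
  then show "(L *v x) $ j = x $ j" using assms unfolding partial_cholesky_def by (simp add: inner_axis')
  show "(transpose L *v x) $ j = x $ j"
  proof -
    have "(transpose L *v x) $ j = (\<Sum>m\<in>UNIV. if m = j then x $ m else 0)"
      unfolding matrix_vector_mult_component by (intro sum.cong) (auto simp: transpose_def row)
    then show ?thesis by simp
  qed
qed

lemma form_eq_if_entries_agree:
  fixes A B :: "real^'n^'n"
  assumes "\<forall>j. j \<notin> S \<longrightarrow> z $ j = 0" and "\<forall>i\<in>S. \<forall>j\<in>S. A $ i $ j = B $ i $ j"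
  shows "z \<bullet> (A *v z) = z \<bullet> (B *v z)"
  unfolding inner_vec_def matrix_vector_mult_component
proof (rule sum.cong[OF refl])
  fix i
  have "i \<in> S \<Longrightarrow> (\<Sum>j\<in>UNIV. A $ i $ j * z $ j) = (\<Sum>j\<in>UNIV. B $ i $ j * z $ j)"
    by (rule sum.cong) (use assms in auto)
  then show "z $ i \<bullet> (\<Sum>j\<in>UNIV. A $ i $ j * z $ j) = z $ i \<bullet> (\<Sum>j\<in>UNIV. B $ i $ j * z $ j)"
    using assms(1) by (cases "i \<in> S") auto
qed

text \<open>With $L x = v$, where $v$ is the part of the $k$-th column of $A$ in $S$, the form of $A$
  at $e_k - L^{-T} x$ equals $A_{kk} - |x|^2$: the Schur complement is positive.\<close>
lemma partial_cholesky_schur_pos: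
  fixes A L :: "real^('n::{finite,wellorder})^('n::{finite,wellorder})"
  assumes pd: "pos_def_mat A" and L: "partial_cholesky A S L" and k: "k \<notin> S"
    and x: "L *v x = (\<chi> j. if j \<in> S then A $ j $ k else 0)"
  shows "x \<bullet> x < A $ k $ k"
proof -
  have sym: "symmetric_mat A" using pd unfolding pos_def_mat_def by blast
  have agree: "\<forall>i\<in>S. \<forall>j\<in>S. A $ i $ j = (L ** transpose L) $ i $ j"
    using L unfolding partial_cholesky_def by auto
  have inv: "invertible (transpose L)"
    using L lower_triangular_invertible transpose_invertible
    unfolding partial_cholesky_def by (metis less_irrefl)
  define z where "z = matrix_inv (transpose L) *v x"
  have z: "transpose L *v z = x" unfolding z_def by (rule matrix_inv_vector_mult(1)[OF inv])
  have xS: "x $ j = 0" if "j \<notin> S" for j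
    using partial_cholesky_mult_vec_outside(1)[OF L that] arg_cong[OF x, of "\<lambda>v. v $ j"] that by simp
  have zS: "\<forall>j. j \<notin> S \<longrightarrow> z $ j = 0"
  proof (intro allI impI)
    fix j assume j: "j \<notin> S"
    show "z $ j = 0"
      using partial_cholesky_mult_vec_outside(2)[OF L j, of z] xS[OF j] unfolding z by simp
  qed
  have "z \<bullet> (A *v axis k 1) = z \<bullet> (L *v x)"
    unfolding x inner_vec_def using zS by (intro sum.cong) (auto simp: matrix_vector_mult_axis)
  also have "\<dots> = x \<bullet> x" unfolding inner_matrix_vector_mult_transpose z ..
  finally have cross: "axis k 1 \<bullet> (A *v z) = x \<bullet> x"
    using symmetric_mat_inner_commute[OF sym, of "axis k 1" z] by simp
  have "z \<bullet> (A *v z) = (norm (transpose L *v z))^2"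
    using form_eq_if_entries_agree[OF zS agree] by (simp only: inner_gram_mult)
  then have square: "z \<bullet> (A *v z) = x \<bullet> x" unfolding z by (simp add: power2_norm_eq_inner)
  have "(axis k 1 - z) $ k = 1" using zS k by simp
  then have "axis k 1 - z \<noteq> 0" by auto
  then have "0 < (axis k 1 - z) \<bullet> (A *v (axis k 1 - z))"
    using pd unfolding pos_def_mat_def by blast
  then show ?thesis
    unfolding symmetric_mat_quadratic_form_diff[OF sym] cross square
    by (simp add: matrix_entry_eq_inner_axis)
qed

lemma partial_cholesky_next_row:
  fixes A L :: "real^('n::{finite,wellorder})^('n::{finite,wellorder})"
  assumes pd: "pos_def_mat A" and L: "partial_cholesky A S L" and k: "k \<notin> S"
  obtains w where "0 < w $ k" "\<forall>j. j \<notin> insert k S \<longrightarrow> w $ j = 0"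
    "w \<bullet> w = A $ k $ k" "\<forall>m\<in>S. w \<bullet> L $ m = A $ k $ m"
proof
  have inv: "invertible L"
    using L lower_triangular_invertible unfolding partial_cholesky_def by (metis less_irrefl)
  define x where "x = matrix_inv L *v (\<chi> j. if j \<in> S then A $ j $ k else 0)"
  have x: "L *v x = (\<chi> j. if j \<in> S then A $ j $ k else 0)"
    unfolding x_def by (rule matrix_inv_vector_mult(1)[OF inv])
  have xS: "x $ j = 0" if "j \<notin> S" for j
    using partial_cholesky_mult_vec_outside(1)[OF L that] arg_cong[OF x, of "\<lambda>v. v $ j"] that by simp
  define c where "c = sqrt (A $ k $ k - x \<bullet> x)"
  have c: "0 < c" "c^2 = A $ k $ k - x \<bullet> x"
    using partial_cholesky_schur_pos[OF pd L k x] unfolding c_def by auto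
  define w where "w = x + c *\<^sub>R axis k 1"
  show "0 < w $ k" "\<forall>j. j \<notin> insert k S \<longrightarrow> w $ j = 0"
    unfolding w_def using c(1) xS xS[OF k] by (auto simp: axis_def)
  show "w \<bullet> w = A $ k $ k"
    using c(2) xS[OF k] unfolding w_def
    by (simp add: inner_add_left inner_add_right inner_axis inner_axis' inner_commute power2_eq_square)
  show "\<forall>m\<in>S. w \<bullet> L $ m = A $ k $ m"
  proof
    fix m assume m: "m \<in> S"
    have "w \<bullet> L $ m = x \<bullet> L $ m + c * L $ m $ k"
      unfolding w_def inner_add_left inner_scaleR_left inner_axis' by simp
    also have "\<dots> = A $ k $ m"
      using arg_cong[OF x, of "\<lambda>v. v $ m"] m k L symmetric_mat_entry[of A m k] pd
      unfolding pos_def_mat_def partial_cholesky_def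
      by (simp add: matrix_vector_mult_component inner_vec_def mult.commute)
    finally show "w \<bullet> L $ m = A $ k $ m" .
  qed
qed

lemma partial_cholesky_insert:
  fixes A L :: "real^('n::{finite,wellorder})^('n::{finite,wellorder})"
  assumes pd: "pos_def_mat A" and L: "partial_cholesky A S L"
    and k: "k \<notin> S" and S_less: "\<forall>j\<in>S. j < k"
  shows "\<exists>L'. partial_cholesky A (insert k S) L'"
proof -
  have lt: "lower_triangular L" and diag: "\<forall>i. 0 < L $ i $ i"
    and unit: "\<And>i. i \<notin> S \<Longrightarrow> L $ i = axis i 1"
    and supp: "\<And>i j. i \<in> S \<Longrightarrow> j \<notin> S \<Longrightarrow> L $ i $ j = 0"
    and gram: "\<And>i j. i \<in> S \<Longrightarrow> j \<in> S \<Longrightarrow> L $ i \<bullet> L $ j = A $ i $ j"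
    using L unfolding partial_cholesky_def gram_entry by auto
  obtain w where w: "0 < w $ k" "\<forall>j. j \<notin> insert k S \<longrightarrow> w $ j = 0"
    "w \<bullet> w = A $ k $ k" "\<forall>m\<in>S. w \<bullet> L $ m = A $ k $ m"
    by (rule partial_cholesky_next_row[OF pd L k])
  define L' where "L' = (\<chi> i. if i = k then w else L $ i)"
  have L'_row: "L' $ i = (if i = k then w else L $ i)" for i unfolding L'_def by simp
  have "partial_cholesky A (insert k S) L'"
    unfolding partial_cholesky_def gram_entry
  proof (intro conjI allI impI ballI)
    show "lower_triangular L'"
      unfolding lower_triangular_def
    proof (intro allI impI)
      fix i j :: 'n assume ij: "i < j"
      show "L' $ i $ j = 0"
      proof (cases "i = k")
        case True
        then have "j \<notin> insert k S" using S_less ij less_asym by blast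
        then show ?thesis using True w(2) by (simp add: L'_row)
      next
        case False
        then show ?thesis using lt ij by (simp add: L'_row lower_triangular_def)
      qed
    qed
    show "0 < L' $ i $ i" for i using diag w(1) by (simp add: L'_row)
    show "L' $ i = axis i 1" if "i \<notin> insert k S" for i using unit that by (simp add: L'_row)
    show "L' $ i $ j = 0" if "i \<in> insert k S" "j \<notin> insert k S" for i j
      using that supp w(2) by (auto simp: L'_row)
    show "L' $ i \<bullet> L' $ j = A $ i $ j" if "i \<in> insert k S" "j \<in> insert k S" for i j
      using that gram w(3,4) symmetric_mat_entry[of A i k] pd k
      by (auto simp: L'_row pos_def_mat_def inner_commute)
  qed
  then show ?thesis by blast
qed

lemma pos_def_cholesky_exists:
  fixes A :: "real^('n::{finite,wellorder})^('n::{finite,wellorder})"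
  assumes "pos_def_mat A"
  shows "\<exists>L. is_cholesky A L"
proof -
  have partial: "\<exists>L. partial_cholesky A S L" if "finite S" for S
    using that
  proof (induction rule: finite_linorder_max_induct)
    case empty
    have "partial_cholesky A {} (mat 1)"
      unfolding partial_cholesky_def lower_triangular_def by (auto simp: mat_def axis_def vec_eq_iff)
    then show ?case by blast
  next
    case (insert k S)
    then obtain L where "partial_cholesky A S L" by blast
    moreover have "k \<notin> S" using insert.hyps(2) by blast
    ultimately show ?case using partial_cholesky_insert[OF assms _ _ insert.hyps(2)] by blast
  qed
  obtain L where "partial_cholesky A UNIV L" using partial[of UNIV] by auto
  then have "is_cholesky A L"
    unfolding partial_cholesky_def is_cholesky_def by (auto simp: vec_eq_iff)
  then show ?thesis ..
qed

section \<open>Perturbation of the Cholesky factor and of the inverse\<close>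

text \<open>Write $L_1 = L_2 M$. Row $i$ of $M$ is $L_1^T r$ with $r$ the $i$-th row of $L_2^{-1}$, so
  $|M_i|^2 = r^T A_1 r = 1 + r^T E r$, while $M_{ii} = L_{1,ii}/L_{2,ii} \ge 1$.\<close>
lemma cholesky_quotient_row_bound:
  fixes A L1 L2 E :: "real^('n::{finite,wellorder})^('n::{finite,wellorder})"
  assumes A: "form_bounded a b A" and a: "0 < a" and E: "form_bounded 0 e E"
    and L1: "is_cholesky (A + E) L1" and L2: "is_cholesky A L2"
  shows "(norm ((matrix_inv L2 ** L1) $ i - axis i 1))^2 \<le> e / a"
proof -
  define R where "R = matrix_inv L2"
  define M where "M = R ** L1"
  have inv: "invertible L2" using lower_triangular_invertible[OF is_choleskyD(1,2)[OF L2]] .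
  have row: "transpose L2 *v R $ i = axis i 1"
    using matrix_inv_mult(2)[OF inv] unfolding R_def matrix_mult_row[symmetric] by (simp add: mat_1_row)
  have "M $ i $ i = (\<Sum>k\<in>UNIV. R $ i $ k * L1 $ k $ i)"
    unfolding M_def matrix_matrix_mult_def by simp
  also have "\<dots> = (\<Sum>k\<in>UNIV. if k = i then R $ i $ i * L1 $ i $ i else 0)"
  proof (rule sum.cong[OF refl])
    fix k
    show "R $ i $ k * L1 $ k $ i = (if k = i then R $ i $ i * L1 $ i $ i else 0)"
      using lower_triangular_matrix_inv(1)[OF is_choleskyD(1,2)[OF L2]] is_choleskyD(1)[OF L1]
      unfolding R_def lower_triangular_def by (cases "i < k"; cases "k < i") auto
  qed
  finally have diag: "M $ i $ i = R $ i $ i * L1 $ i $ i" by simp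
  have "L2 $ i $ i \<le> L1 $ i $ i"
    using cholesky_diag_mono[OF L1 L2] form_bounded_nonneg[OF E]
    by (simp add: matrix_vector_mult_add_rdistrib inner_add_right)
  then have Mii: "1 \<le> M $ i $ i"
    unfolding diag R_def lower_triangular_matrix_inv(2)[OF is_choleskyD(1,2)[OF L2]]
    using is_choleskyD(3)[OF L2] by simp
  have rA: "R $ i \<bullet> (A *v R $ i) = 1"
    unfolding is_choleskyD(4)[OF L2] inner_gram_mult row by simp
  have "(norm (M $ i))^2 = R $ i \<bullet> ((A + E) *v R $ i)"
    unfolding M_def matrix_mult_row is_choleskyD(4)[OF L1] inner_gram_mult ..
  also have "\<dots> = 1 + R $ i \<bullet> (E *v R $ i)"
    by (simp add: matrix_vector_mult_add_rdistrib inner_add_right rA)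
  finally have nM: "(norm (M $ i))^2 = 1 + R $ i \<bullet> (E *v R $ i)" .
  have "a * (norm (R $ i))^2 \<le> 1" using form_boundedD(2)[OF A, of "R $ i"] rA by simp
  then have nR: "(norm (R $ i))^2 \<le> 1 / a" using a by (simp add: field_simps)
  have "(norm (M $ i - axis i 1))^2 = (norm (M $ i))^2 - 2 * M $ i $ i + 1"
    by (simp add: power2_norm_eq_inner inner_diff_left inner_diff_right inner_axis inner_axis' inner_commute)
  also have "\<dots> \<le> R $ i \<bullet> (E *v R $ i)" using nM Mii by simp
  also have "\<dots> \<le> e * (norm (R $ i))^2" by (rule form_boundedD(3)[OF E])
  also have "\<dots> \<le> e / a"
    using mult_left_mono[OF nR] form_bounded_nonneg[OF E order_refl, of "axis i 1"]
      form_boundedD(3)[OF E, of "axis i 1"] by simp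
  finally show ?thesis unfolding M_def R_def .
qed

lemma cholesky_perturbation:
  fixes A L1 L2 E :: "real^('n::{finite,wellorder})^('n::{finite,wellorder})"
  assumes A: "form_bounded a b A" and a: "0 < a" and E: "form_bounded 0 e E"
    and L1: "is_cholesky (A + E) L1" and L2: "is_cholesky A L2"
  shows "(norm (L1 - L2))^2 \<le> real CARD('n) * b * e / a"
proof -
  define M where "M = matrix_inv L2 ** L1"
  have inv: "invertible L2" using lower_triangular_invertible[OF is_choleskyD(1,2)[OF L2]] .
  have b: "0 \<le> b" using form_bounded_diag[OF A, of undefined] a by linarith
  have "L2 ** M = L1" unfolding M_def by (simp add: matrix_mul_assoc matrix_inv_mult(1)[OF inv])
  then have diff: "L1 - L2 = L2 ** (M - mat 1)"
    by (metis add_diff_cancel_right' diff_add_cancel matrix_add_ldistrib matrix_mul_rid)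
  have "(norm (M - mat 1))^2 = (\<Sum>i\<in>UNIV. (norm (M $ i - axis i 1))^2)"
    unfolding norm_sq_matrix_eq_sum_rows by (simp add: mat_1_row)
  also have "\<dots> \<le> real CARD('n) * (e / a)"
    by (rule sum_bounded_above) (use cholesky_quotient_row_bound[OF A a E L1 L2] in \<open>simp add: M_def\<close>)
  finally have rows: "(norm (M - mat 1))^2 \<le> real CARD('n) * (e / a)" .
  have "(norm (L2 *v w))^2 \<le> b * (norm w)^2" for w
    using form_boundedD(3)[OF A] unfolding is_choleskyD(4)[OF L2] inner_gram_mult
    by (rule norm_sq_mult_vec_le_if_transpose)
  then have "(norm (L1 - L2))^2 \<le> b * (norm (M - mat 1))^2"
    unfolding diff by (rule norm_sq_matrix_mult_le)
  also have "\<dots> \<le> b * (real CARD('n) * (e / a))" using rows b by (rule mult_left_mono)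
  finally show ?thesis by (simp add: ac_simps)
qed

text \<open>With $p = A_1^{-1} e_i$ and $q = A^{-1} e_i$ one has $p_i - q_i = -q^T E p$.\<close>
lemma matrix_inv_diag_perturbation:
  fixes A E :: "real^'n^'n"
  assumes A: "form_bounded a b A" and a: "0 < a" and E: "form_bounded 0 e E"
  shows "\<bar>matrix_inv (A + E) $ i $ i - matrix_inv A $ i $ i\<bar> \<le> e / a^2"
proof -
  have A1: "form_bounded a (b + e) (A + E)" using form_bounded_add[OF A E] by simp
  define p where "p = matrix_inv (A + E) *v axis i 1"
  define q where "q = matrix_inv A *v axis i 1"
  have Ap: "(A + E) *v p = axis i 1"
    unfolding p_def by (rule matrix_inv_vector_mult(1)[OF form_bounded_invertible[OF A1 a]])
  have Aq: "A *v q = axis i 1"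
    unfolding q_def by (rule matrix_inv_vector_mult(1)[OF form_bounded_invertible[OF A a]])
  have "p $ i = q \<bullet> (A *v p)"
    using symmetric_mat_inner_commute[OF form_boundedD(1)[OF A], of q p] Aq
    by (simp add: inner_axis)
  moreover have "q $ i = q \<bullet> ((A + E) *v p)" unfolding Ap by (simp add: inner_axis)
  ultimately have "\<bar>p $ i - q $ i\<bar> = \<bar>q \<bullet> (E *v p)\<bar>"
    by (simp add: matrix_vector_mult_add_rdistrib inner_add_right)
  also have "\<dots> \<le> e * (norm p + norm q)^2 / 4" by (rule form_bounded_polarization[OF E])
  also have "\<dots> \<le> e * (1 / a + 1 / a)^2 / 4"
    using form_bounded_norm_matrix_inv_vector[OF A1 a, of "axis i 1"]
      form_bounded_norm_matrix_inv_vector[OF A a, of "axis i 1"]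
      form_boundedD(3)[OF E, of "axis i 1"] form_bounded_nonneg[OF E order_refl, of "axis i 1"]
    unfolding p_def[symmetric] q_def[symmetric]
    by (intro divide_right_mono mult_left_mono power_mono add_mono) auto
  also have "\<dots> = e / a^2" by (simp add: power2_eq_square field_simps)
  finally show ?thesis by (simp add: p_def q_def matrix_vector_mult_axis)
qed

lemma abs_sqrt_diff_le:
  fixes p q l m :: real
  assumes "0 \<le> p" "p \<le> m" "0 < l" "l \<le> q" "q \<le> m"
  shows "\<bar>sqrt p - sqrt q\<bar> \<le> sqrt m" and "\<bar>sqrt p - sqrt q\<bar> \<le> \<bar>p - q\<bar> / sqrt l"
proof -
  have roots: "0 \<le> sqrt p" "sqrt p \<le> sqrt m" "0 < sqrt l" "sqrt l \<le> sqrt q" "sqrt q \<le> sqrt m"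
    using assms by (auto intro: real_sqrt_le_mono)
  then show "\<bar>sqrt p - sqrt q\<bar> \<le> sqrt m" by linarith
  have "\<bar>sqrt p - sqrt q\<bar> * sqrt l \<le> \<bar>sqrt p - sqrt q\<bar> * (sqrt p + sqrt q)"
    using roots by (intro mult_left_mono) (linarith, simp)
  also have "\<dots> = \<bar>(sqrt p - sqrt q) * (sqrt p + sqrt q)\<bar>" using roots by (simp add: abs_mult)
  also have "\<dots> = \<bar>p - q\<bar>" using assms by (simp add: algebra_simps)
  finally show "\<bar>sqrt p - sqrt q\<bar> \<le> \<bar>p - q\<bar> / sqrt l"
    using roots(3) by (simp add: le_divide_eq)
qed

lemma sqrt_matrix_inv_diag_perturbation:
  fixes A E :: "real^'n^'n"
  assumes A: "form_bounded (a * h) (b * h) A" and E: "form_bounded 0 (b * \<delta>) E"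
    and a: "0 < a" and h: "0 < h" and \<delta>: "0 \<le> \<delta>"
  shows "\<bar>sqrt (matrix_inv (A + E) $ i $ i) - sqrt (matrix_inv A $ i $ i)\<bar>
    \<le> max (1 / sqrt a) (b * sqrt b / a^2) * min (1 / sqrt h) (\<delta> / h powr (3/2))"
proof -
  have ah: "0 < a * h" using a h by simp
  have "0 < b * h" using form_bounded_diag[OF A, of undefined] ah by linarith
  then have b: "0 < b" using h by (simp add: zero_less_mult_iff)
  have A1: "form_bounded (a * h) (b * h + b * \<delta>) (A + E)" using form_bounded_add[OF A E] by simp
  let ?p = "matrix_inv (A + E) $ i $ i" and ?q = "matrix_inv A $ i $ i"
  have p: "0 \<le> ?p" "?p \<le> 1 / (a * h)"
    using form_bounded_diag[OF form_bounded_matrix_inv[OF A1 ah], of i] b h \<delta>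
    by (auto intro: order_trans[rotated])
  have q: "1 / (b * h) \<le> ?q" "?q \<le> 1 / (a * h)"
    using form_bounded_diag[OF form_bounded_matrix_inv[OF A ah]] by auto
  have l: "0 < 1 / (b * h)" using b h by simp
  have "\<bar>sqrt ?p - sqrt ?q\<bar> \<le> sqrt (1 / (a * h))"
    by (rule abs_sqrt_diff_le(1)[OF p l q])
  also have "\<dots> = 1 / sqrt a * (1 / sqrt h)" by (simp add: real_sqrt_divide real_sqrt_mult)
  finally have bound1: "\<bar>sqrt ?p - sqrt ?q\<bar> \<le> 1 / sqrt a * (1 / sqrt h)" .
  have "\<bar>sqrt ?p - sqrt ?q\<bar> \<le> \<bar>?p - ?q\<bar> / sqrt (1 / (b * h))"
    by (rule abs_sqrt_diff_le(2)[OF p l q])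
  also have "\<dots> \<le> b * \<delta> / (a * h)^2 / sqrt (1 / (b * h))"
    using matrix_inv_diag_perturbation[OF A ah E, of i] l by (intro divide_right_mono) auto
  also have "\<dots> = b * \<delta> * sqrt b * sqrt h / (a^2 * (sqrt h * sqrt h)^2)"
    using b h by (simp add: real_sqrt_divide real_sqrt_mult power_mult_distrib)
  also have "\<dots> = b * sqrt b / a^2 * (\<delta> / h powr (3/2))"
  proof -
    have "h powr (3/2) = h powr (1 + 1/2)" by simp
    also have "\<dots> = h powr 1 * h powr (1/2)" by (rule powr_add)
    finally have "h powr (3/2) = sqrt h * sqrt h * sqrt h" using h by (simp add: powr_half_sqrt)
    then show ?thesis using a h by (simp add: field_simps power2_eq_square)
  qed
  finally have bound2: "\<bar>sqrt ?p - sqrt ?q\<bar> \<le> b * sqrt b / a^2 * (\<delta> / h powr (3/2))" .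
  have "0 \<le> 1 / sqrt h" "0 \<le> \<delta> / h powr (3/2)" using h \<delta> by auto
  then have "\<bar>sqrt ?p - sqrt ?q\<bar> \<le> max (1 / sqrt a) (b * sqrt b / a^2) * (1 / sqrt h)"
    "\<bar>sqrt ?p - sqrt ?q\<bar> \<le> max (1 / sqrt a) (b * sqrt b / a^2) * (\<delta> / h powr (3/2))"
    using order_trans[OF bound1 mult_right_mono[OF max.cobounded1]]
      order_trans[OF bound2 mult_right_mono[OF max.cobounded2]] by blast+
  then show ?thesis by (simp add: min_def)
qed

section \<open>The covariance matrix\<close>

lemma holder_on01_continuous_on:
  fixes C :: "real \<Rightarrow> real^'n^'n"
  assumes \<alpha>: "0 < \<alpha>" and "holder_on01 \<alpha> C"
  shows "continuous_on {0..1} C"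
proof -
  obtain K where "\<forall>t\<in>{0..1}. \<forall>u\<in>{0..1}. frob_norm (C t - C u) \<le> K * \<bar>t - u\<bar> powr \<alpha>"
    using assms(2) unfolding holder_on01_def by blast
  then have K: "dist (C u) (C t) \<le> K * \<bar>u - t\<bar> powr \<alpha>" if "t \<in> {0..1}" "u \<in> {0..1}" for t u
    using that by (simp add: frob_norm_eq_norm dist_norm)
  show ?thesis
    unfolding continuous_on_iff
  proof (intro ballI allI impI)
    fix t e :: real assume t: "t \<in> {0..1}" and e: "0 < e"
    define K' where "K' = \<bar>K\<bar> + 1"
    have K': "0 < K'" unfolding K'_def by simp
    define d where "d = (e / K') powr (1 / \<alpha>)"
    have "0 < d" unfolding d_def using e K' by simp
    moreover have "dist (C u) (C t) < e" if u: "u \<in> {0..1}" and ut: "dist u t < d" for u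
    proof -
      have "\<bar>u - t\<bar> powr \<alpha> < d powr \<alpha>"
        using ut \<alpha> by (intro powr_less_mono2) (auto simp: dist_real_def)
      also have "\<dots> = e / K'" unfolding d_def using e K' \<alpha> by (simp add: powr_powr)
      finally have "K' * \<bar>u - t\<bar> powr \<alpha> < e" using K' by (simp add: field_simps)
      moreover have "K * \<bar>u - t\<bar> powr \<alpha> \<le> K' * \<bar>u - t\<bar> powr \<alpha>"
        unfolding K'_def by (intro mult_right_mono) auto
      ultimately show ?thesis using K[OF t u] by linarith
    qed
    ultimately show "\<exists>d>0. \<forall>u\<in>{0..1}. dist u t < d \<longrightarrow> dist (C u) (C t) < e" by blast
  qed
qed

lemma continuous_on_gram:
  fixes C :: "real \<Rightarrow> real^'n^'m"
  assumes "continuous_on S C"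
  shows "continuous_on S (\<lambda>u. C u ** transpose (C u))"
proof -
  have eq: "(\<lambda>u. C u ** transpose (C u)) = (\<lambda>u. \<chi> i j. \<Sum>k\<in>UNIV. C u $ i $ k * C u $ j $ k)"
    by (simp add: fun_eq_iff matrix_matrix_mult_def transpose_def)
  show ?thesis unfolding eq by (intro continuous_intros assms)
qed

lemma gram_integrable_on:
  fixes C :: "real \<Rightarrow> real^'n^'m"
  assumes "continuous_on {0..1} C" and "0 \<le> t" "s \<le> 1"
  shows "(\<lambda>u. C u ** transpose (C u)) integrable_on {t..s}"
  using continuous_on_subset[OF continuous_on_gram[OF assms(1)]] assms(2,3)
  by (intro integrable_continuous_interval) auto

lemma Sigma_mat_form_bounded:
  fixes C :: "real \<Rightarrow> real^'n^'n"
  assumes cont: "continuous_on {0..1} C" and cov: "cov_bounds dl du C"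
    and ts: "0 \<le> t" "t \<le> s" "s \<le> 1"
  shows "form_bounded (dl * (s - t)) (du * (s - t)) (Sigma_mat C t s)"
  unfolding form_bounded_def
proof (intro conjI allI)
  let ?Q = "\<lambda>u. C u ** transpose (C u)"
  have int: "?Q integrable_on {t..s}" using gram_integrable_on[OF cont ts(1,3)] .
  have entry: "bounded_linear (\<lambda>M::real^'n^'n. M $ i $ j)" for i j
    by (intro bounded_linear_compose[OF bounded_linear_vec_nth] bounded_linear_vec_nth)
  have Sigma_entry: "Sigma_mat C t s $ i $ j = integral {t..s} (\<lambda>u. ?Q u $ i $ j)" for i j
    unfolding Sigma_mat_def using integral_linear[OF int entry, of i j] by (simp add: o_def)
  have "?Q u $ i $ j = ?Q u $ j $ i" for u i j
    by (simp add: matrix_matrix_mult_def transpose_def mult.commute)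
  then have "Sigma_mat C t s $ i $ j = Sigma_mat C t s $ j $ i" for i j
    unfolding Sigma_entry by simp
  then show "symmetric_mat (Sigma_mat C t s)"
    unfolding symmetric_mat_def by (simp add: transpose_def vec_eq_iff)
  fix x :: "real^'n"
  have "linear (\<lambda>M::real^'n^'n. x \<bullet> (M *v x))"
    by (rule linearI)
       (simp_all add: matrix_vector_mult_add_rdistrib inner_add_right scaleR_matrix_vector_assoc[symmetric])
  then have form: "bounded_linear (\<lambda>M::real^'n^'n. x \<bullet> (M *v x))"
    using linear_conv_bounded_linear by blast
  have Sigma_form: "x \<bullet> (Sigma_mat C t s *v x) = integral {t..s} (\<lambda>u. x \<bullet> (?Q u *v x))"
    unfolding Sigma_mat_def using integral_linear[OF int form] by (simp add: o_def)
  have int_form: "(\<lambda>u. x \<bullet> (?Q u *v x)) integrable_on {t..s}"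
    using integrable_linear[OF int form] by (simp add: o_def)
  have bounds: "dl * (norm x)^2 \<le> x \<bullet> (?Q u *v x) \<and> x \<bullet> (?Q u *v x) \<le> du * (norm x)^2"
    if "u \<in> {t..s}" for u
    using cov that ts unfolding cov_bounds_def by auto
  have "integral {t..s} (\<lambda>u. dl * (norm x)^2) \<le> integral {t..s} (\<lambda>u. x \<bullet> (?Q u *v x))"
    by (rule integral_le) (use int_form bounds in auto)
  then show "dl * (s - t) * (norm x)^2 \<le> x \<bullet> (Sigma_mat C t s *v x)"
    unfolding Sigma_form using ts by (simp add: ac_simps)
  have "integral {t..s} (\<lambda>u. x \<bullet> (?Q u *v x)) \<le> integral {t..s} (\<lambda>u. du * (norm x)^2)"
    by (rule integral_le) (use int_form bounds in auto)
  then show "x \<bullet> (Sigma_mat C t s *v x) \<le> du * (s - t) * (norm x)^2"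
    unfolding Sigma_form using ts by (simp add: ac_simps)
qed

lemma Sigma_mat_split:
  fixes C :: "real \<Rightarrow> real^'n^'n"
  assumes "continuous_on {0..1} C" and "0 \<le> t1" "t1 \<le> t2" "t2 \<le> s" "s \<le> 1"
  shows "Sigma_mat C t1 s = Sigma_mat C t2 s + Sigma_mat C t1 t2"
proof -
  have int: "(\<lambda>u. C u ** transpose (C u)) integrable_on {t1..s}"
    using gram_integrable_on[OF assms(1,2,5)] .
  show ?thesis
    unfolding Sigma_mat_def
    using Henstock_Kurzweil_Integration.integral_combine[OF assms(3,4) int] by (simp add: add.commute)
qed

lemma Sigma_mat_cholesky_lipschitz:
  fixes C :: "real \<Rightarrow> real^('n::{finite,wellorder})^('n::{finite,wellorder})"
  assumes C: "continuous_on {0..1} C" "cov_bounds dl du C" and dl: "0 < dl"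
    and ts: "0 \<le> t1" "t1 < t2" "t2 < s" "s \<le> 1"
    and L1: "is_cholesky (Sigma_mat C t1 s) L1" and L2: "is_cholesky (Sigma_mat C t2 s) L2"
  shows "frob_norm (L1 - L2) \<le> sqrt (real CARD('n) * du^2 / dl) * sqrt (t2 - t1)"
proof -
  have A: "form_bounded (dl * (s - t2)) (du * (s - t2)) (Sigma_mat C t2 s)"
    and E: "form_bounded (dl * (t2 - t1)) (du * (t2 - t1)) (Sigma_mat C t1 t2)"
    using Sigma_mat_form_bounded[OF C] ts by auto
  have E0: "form_bounded 0 (du * (t2 - t1)) (Sigma_mat C t1 t2)"
    using form_bounded_mono[OF E] dl ts by simp
  have "Sigma_mat C t1 s = Sigma_mat C t2 s + Sigma_mat C t1 t2"
    by (rule Sigma_mat_split[OF C(1)]) (use ts in auto)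
  then have "(norm (L1 - L2))^2 \<le> real CARD('n) * (du * (s - t2)) * (du * (t2 - t1)) / (dl * (s - t2))"
    using cholesky_perturbation[OF A _ E0 _ L2] L1 dl ts by simp
  also have "\<dots> = real CARD('n) * du^2 / dl * (t2 - t1)"
    using dl ts by (simp add: power2_eq_square field_simps)
  also have "\<dots> = (sqrt (real CARD('n) * du^2 / dl) * sqrt (t2 - t1))^2"
    using dl ts by (simp add: power_mult_distrib)
  finally show ?thesis
    unfolding frob_norm_eq_norm by (rule power2_le_imp_le) (use dl ts in simp)
qed

lemma Sigma_mat_sqrt_inv_diag_lipschitz:
  fixes C :: "real \<Rightarrow> real^'n^'n"
  assumes C: "continuous_on {0..1} C" "cov_bounds dl du C" and dl: "0 < dl"
    and ts: "0 \<le> t1" "t1 < t2" "t2 < s" "s \<le> 1"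
  shows "\<bar>sqrt (matrix_inv (Sigma_mat C t1 s) $ i $ i) - sqrt (matrix_inv (Sigma_mat C t2 s) $ i $ i)\<bar>
    \<le> max (1 / sqrt dl) (du * sqrt du / dl^2) * min (1 / sqrt (s - t2)) ((t2 - t1) / (s - t2) powr (3/2))"
proof -
  have A: "form_bounded (dl * (s - t2)) (du * (s - t2)) (Sigma_mat C t2 s)"
    and E: "form_bounded (dl * (t2 - t1)) (du * (t2 - t1)) (Sigma_mat C t1 t2)"
    using Sigma_mat_form_bounded[OF C] ts by auto
  have E0: "form_bounded 0 (du * (t2 - t1)) (Sigma_mat C t1 t2)"
    using form_bounded_mono[OF E] dl ts by simp
  have "Sigma_mat C t1 s = Sigma_mat C t2 s + Sigma_mat C t1 t2"
    by (rule Sigma_mat_split[OF C(1)]) (use ts in auto)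
  then show ?thesis
    using sqrt_matrix_inv_diag_perturbation[OF A E0 dl, of i] ts by simp
qed

theorem lemmaA2:
  fixes dl du :: real
  assumes "du > dl" and "dl > 0"
  shows
   "(\<forall>(C :: real \<Rightarrow> real^('n::{finite,wellorder})^('n::{finite,wellorder})) \<alpha> t s.
       \<alpha> \<in> {0<..<1} \<and> holder_on01 \<alpha> C \<and> cov_bounds dl du C \<and> 0 \<le> t \<and> t < s \<and> s \<le> 1 \<longrightarrow>
       (symmetric_mat (Sigma_mat C t s) \<and> pos_def_mat (Sigma_mat C t s) \<and>
        (\<forall>i j. \<bar>Sigma_mat C t s $ i $ j\<bar> \<le> du * (s - t)) \<and>
        (\<forall>i. dl * (s - t) \<le> Sigma_mat C t s $ i $ i)) \<and>
       (invertible (Sigma_mat C t s) \<and>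
        symmetric_mat (matrix_inv (Sigma_mat C t s)) \<and>
        pos_def_mat (matrix_inv (Sigma_mat C t s)) \<and>
        (\<forall>i. 1 / (du * (s - t)) \<le> matrix_inv (Sigma_mat C t s) $ i $ i \<and>
             matrix_inv (Sigma_mat C t s) $ i $ i \<le> 1 / (dl * (s - t))) \<and>
        (\<forall>i j. \<bar>matrix_inv (Sigma_mat C t s) $ i $ j\<bar> \<le> 1 / (dl * (s - t)))) \<and>
       ((\<exists>L. is_cholesky (Sigma_mat C t s) L) \<and>
        (\<forall>L. is_cholesky (Sigma_mat C t s) L \<longrightarrow>
           (\<forall>i j. \<bar>L $ i $ j\<bar> \<le> sqrt (du * (s - t))) \<and>
           (\<forall>i. L $ i $ i \<ge> sqrt (dl * (s - t))))))
    \<and>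
    (\<exists>c. \<forall>(C :: real \<Rightarrow> real^('n::{finite,wellorder})^('n::{finite,wellorder})) \<alpha> t1 t2 s L1 L2.
       \<alpha> \<in> {0<..<1} \<and> holder_on01 \<alpha> C \<and> cov_bounds dl du C \<and>
       0 \<le> t1 \<and> t1 < t2 \<and> t2 < s \<and> s \<le> 1 \<and>
       is_cholesky (Sigma_mat C t1 s) L1 \<and> is_cholesky (Sigma_mat C t2 s) L2 \<longrightarrow>
       frob_norm (L1 - L2) \<le> c * sqrt (t2 - t1))
    \<and>
    (\<exists>c. \<forall>(C :: real \<Rightarrow> real^('n::{finite,wellorder})^('n::{finite,wellorder})) \<alpha> t1 t2 s i.
       \<alpha> \<in> {0<..<1} \<and> holder_on01 \<alpha> C \<and> cov_bounds dl du C \<and>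
       0 \<le> t1 \<and> t1 < t2 \<and> t2 < s \<and> s \<le> 1 \<longrightarrow>
       \<bar>sqrt (matrix_inv (Sigma_mat C t1 s) $ i $ i) - sqrt (matrix_inv (Sigma_mat C t2 s) $ i $ i)\<bar>
         \<le> c * min (1 / sqrt (s - t2)) ((t2 - t1) / (s - t2) powr (3/2)))"
proof -
  have cont: "continuous_on {0..1} C" if "\<alpha> \<in> {0<..<1}" "holder_on01 \<alpha> C"
    for C :: "real \<Rightarrow> real^('n::{finite,wellorder})^('n::{finite,wellorder})" and \<alpha>
    using holder_on01_continuous_on that by auto
  show ?thesis
  proof (intro conjI, goal_cases)
    case 1
    show ?case
    proof (intro allI impI, goal_cases)
      case (1 C \<alpha> t s)
      then have H: "\<alpha> \<in> {0<..<1}" "holder_on01 \<alpha> C" "cov_bounds dl du C" "0 \<le> t" "t < s" "s \<le> 1"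
        by auto
      have A: "form_bounded (dl * (s - t)) (du * (s - t)) (Sigma_mat C t s)"
        using Sigma_mat_form_bounded[OF cont[OF H(1,2)] H(3)] H(4-6) by simp
      have a: "0 < dl * (s - t)" and b: "0 < 1 / (du * (s - t))" using assms H(5) by simp_all
      show ?case
        using form_bounded_spd_entries[OF A a] form_bounded_invertible[OF A a]
          form_bounded_spd_entries[OF form_bounded_matrix_inv[OF A a] b]
          pos_def_cholesky_exists form_bounded_cholesky_entries[OF A] a
        by (auto simp: less_imp_le)
    qed
  next
    case 2
    show ?case
      by (intro exI[of _ "sqrt (real CARD('n) * du^2 / dl)"] allI impI)
         (use Sigma_mat_cholesky_lipschitz cont assms(2) in blast)
  next
    case 3
    show ?case
      by (intro exI[of _ "max (1 / sqrt dl) (du * sqrt du / dl^2)"] allI impI)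
         (use Sigma_mat_sqrt_inv_diag_lipschitz cont assms(2) in blast)
  qed
qed

end
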